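(* Let the Mathieu group $M_{12}$ act (sharply $5$-transitively) on a $12$-element set $\Omega$, with a distinguished point $F\in\Omega$. Then (a) $hd((M_{12})^{\triangle}_{-})\geq 6$; (b) $M(11,6)\geq |M_{12}|=95040$; (c) $M(10,6)\geq 8640$.
   Context: $hd(\pi,\sigma)$ is the number of points at which permutations $\pi,\sigma$ differ; $hd(A)$ is the minimum over distinct pairs in $A$. For a permutation $\pi$ of $\Omega$, $\pi^{\triangle}$ is defined by $\pi^{\triangle}(\pi^{-1}(F))=\pi(F)$, $\pi^{\triangle}(F)=F$, $\pi^{\triangle}(x)=\pi(x)$ otherwise; $\pi^{\triangle}_{-}$ is its restriction to $\Omega\setminus\{F\}$; for a set $S$ of permutations, $S^{\triangle}_{-}=\{\pi^{\triangle}_{-}:\pi\in S\}$. $M(n,d)$ is the maximum size of a set of permutations of an $n$-element set with pairwise Hamming distance at least $d$. *)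

theory Defs
  imports "HOL-Combinatorics.Permutations"
begin

definition hd :: "('a \<Rightarrow> 'a) \<Rightarrow> ('a \<Rightarrow> 'a) \<Rightarrow> nat" where
  "hd p q = card {x. p x \<noteq> q x}"

definition hd_set :: "('a \<Rightarrow> 'a) set \<Rightarrow> nat" where
  "hd_set A = Min {hd p q | p q. p \<in> A \<and> q \<in> A \<and> p \<noteq> q}"

definition M :: "nat \<Rightarrow> nat \<Rightarrow> nat" where
  "M n d = Max {card A | A. A \<subseteq> {p. p permutes {0..<n}} \<and>
                  (\<forall>p\<in>A. \<forall>q\<in>A. p \<noteq> q \<longrightarrow> d \<le> hd p q)}"

definition tri :: "'a \<Rightarrow> ('a \<Rightarrow> 'a) \<Rightarrow> 'a \<Rightarrow> 'a" where
  "tri F p x = (if x = F then F else if x = inv p F then p F else p x)"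

definition tri_minus :: "'a set \<Rightarrow> 'a \<Rightarrow> ('a \<Rightarrow> 'a) \<Rightarrow> 'a \<Rightarrow> 'a" where
  "tri_minus \<Omega> F p x = (if x \<in> \<Omega> - {F} then tri F p x else x)"

definition tri_minus_set :: "'a set \<Rightarrow> 'a \<Rightarrow> ('a \<Rightarrow> 'a) set \<Rightarrow> ('a \<Rightarrow> 'a) set" where
  "tri_minus_set \<Omega> F S = tri_minus \<Omega> F ` S"

definition perm_group_on :: "'a set \<Rightarrow> ('a \<Rightarrow> 'a) set \<Rightarrow> bool" where
  "perm_group_on \<Omega> G \<longleftrightarrow> G \<subseteq> {p. p permutes \<Omega>} \<and> id \<in> G \<and>
     (\<forall>p\<in>G. \<forall>q\<in>G. p \<circ> q \<in> G) \<and> (\<forall>p\<in>G. inv p \<in> G)"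

definition sharply_k_transitive :: "nat \<Rightarrow> 'a set \<Rightarrow> ('a \<Rightarrow> 'a) set \<Rightarrow> bool" where
  "sharply_k_transitive k \<Omega> G \<longleftrightarrow>
     (\<forall>xs ys. length xs = k \<and> distinct xs \<and> set xs \<subseteq> \<Omega> \<and>
              length ys = k \<and> distinct ys \<and> set ys \<subseteq> \<Omega> \<longrightarrow>
              (\<exists>!g. g \<in> G \<and> map g xs = ys))"

end

theory Submission
  imports Defs
begin

text \<open>
  Distinct elements of a sharply 5-transitive group agree on at most 4 points. Passing from
  \<open>\<pi>\<close> to \<open>\<pi>\<^sup>\<triangle>\<^sub>-\<close> changes \<open>\<pi>\<close> only at \<open>F\<close> and \<open>\<pi>\<^sup>-\<^sup>1(F)\<close>, so two such restrictions agree on at most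
  4 + 2 of the 11 remaining points, and 6 agreements force \<open>r = \<sigma>\<^sup>-\<^sup>1\<pi>\<close> to fix 4 points and to cycle
  three further points. Then \<open>r\<^sup>3\<close> fixes 7 points, so \<open>r\<^sup>3 = 1\<close>, and \<open>r\<close> would be a fixed-point-free
  permutation of order 3 of the last 5 points, which is impossible. Hence the 95040 restrictions
  form a code of minimum distance 6 on 11 points; shortening it at one coordinate keeps at least
  a \<open>1/11\<close>-th of it, namely 8640 permutations of 10 points.
\<close>

definition pairwise_hd_ge :: "nat \<Rightarrow> ('a \<Rightarrow> 'a) set \<Rightarrow> bool" where
  "pairwise_hd_ge d A \<longleftrightarrow> (\<forall>p\<in>A. \<forall>q\<in>A. p \<noteq> q \<longrightarrow> d \<le> hd p q)"

lemma disagreement_set_subset: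
  assumes "p permutes X" "q permutes X"
  shows "{x. p x \<noteq> q x} \<subseteq> X"
proof
  fix x assume "x \<in> {x. p x \<noteq> q x}"
  then show "x \<in> X" using permutes_not_in[OF assms(1)] permutes_not_in[OF assms(2)] by force
qed

lemma hd_permutes:
  assumes "finite X" "p permutes X" "q permutes X"
  shows "hd p q = card X - card {x\<in>X. p x = q x}"
proof -
  have "{x. p x \<noteq> q x} = X - {x\<in>X. p x = q x}"
    using disagreement_set_subset[OF assms(2,3)] by auto
  then show ?thesis
    unfolding hd_def using assms(1) by (simp add: card_Diff_subset)
qed

lemma hd_eq_0_permutes:
  assumes "finite X" "p permutes X" "q permutes X" "hd p q = 0"
  shows "p = q"
proof -
  have "finite {x. p x \<noteq> q x}"
    using disagreement_set_subset[OF assms(2,3)] assms(1) by (rule finite_subset)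
  then show ?thesis using assms(4) unfolding hd_def by auto
qed

lemma hd_comp_transpose: "hd (transpose u v \<circ> p) (transpose u v \<circ> q) = hd p q"
  unfolding hd_def comp_def by (simp add: inj_eq[OF inj_transpose])

lemma hd_set_ge:
  assumes "2 \<le> card A" "pairwise_hd_ge d A"
  shows "d \<le> hd_set A"
proof -
  let ?H = "{hd p q | p q. p \<in> A \<and> q \<in> A \<and> p \<noteq> q}"
  have "finite A" using assms(1) by (intro card_ge_0_finite) simp
  moreover have "?H \<subseteq> (\<lambda>(p, q). hd p q) ` (A \<times> A)" by auto
  ultimately have "finite ?H" by (meson finite_SigmaI finite_imageI finite_subset)
  moreover have "\<not> card A \<le> Suc 0" using assms(1) by simp
  then have "?H \<noteq> {}" using card_le_Suc0_iff_eq[OF \<open>finite A\<close>] by blast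
  ultimately show ?thesis
    using assms(2) unfolding hd_set_def pairwise_hd_ge_def by (auto simp: Min_ge_iff)
qed

subsection \<open>Permutation codes and \<open>M(n,d)\<close>\<close>

lemma card_le_M:
  assumes "A \<subseteq> {p. p permutes {0..<n}}" "pairwise_hd_ge d A"
  shows "card A \<le> M n d"
proof -
  let ?P = "{p. p permutes {0..<n::nat}}"
  have "{card B | B. B \<subseteq> ?P \<and> pairwise_hd_ge d B} \<subseteq> card ` Pow ?P" by auto
  then have "finite {card B | B. B \<subseteq> ?P \<and> pairwise_hd_ge d B}"
    by (rule finite_subset) (simp add: finite_permutations)
  then show ?thesis
    using assms unfolding M_def pairwise_hd_ge_def[symmetric] by (auto intro: Max_ge)
qed

definition relabel :: "('b \<Rightarrow> 'a) \<Rightarrow> 'b set \<Rightarrow> ('a \<Rightarrow> 'a) \<Rightarrow> 'b \<Rightarrow> 'b" where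
  "relabel f I p i = (if i \<in> I then inv_into I f (p (f i)) else i)"

lemma relabel_permutes:
  assumes "bij_betw f I X" "p permutes X"
  shows "relabel f I p permutes I"
proof (rule bij_imp_permutes)
  have "bij_betw (inv_into I f \<circ> p \<circ> f) I I"
    using bij_betw_trans[OF bij_betw_trans[OF assms(1) permutes_imp_bij[OF assms(2)]]
        bij_betw_inv_into[OF assms(1)]]
    by (simp add: comp_assoc)
  then show "bij_betw (relabel f I p) I I"
    by (rule bij_betw_cong[THEN iffD1, rotated]) (simp add: relabel_def)
qed (simp add: relabel_def)

lemma hd_relabel:
  assumes "bij_betw f I X" "p permutes X" "q permutes X"
  shows "hd (relabel f I p) (relabel f I q) = hd p q"
proof -
  let ?D = "{i\<in>I. p (f i) \<noteq> q (f i)}"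
  have "relabel f I p i \<noteq> relabel f I q i \<longleftrightarrow> i \<in> ?D" for i
  proof (cases "i \<in> I")
    case True
    then have "f i \<in> X" using assms(1) bij_betwE by blast
    then have "p (f i) \<in> X" "q (f i) \<in> X" using assms(2,3) by (simp_all add: permutes_in_image)
    then show ?thesis
      using True inj_on_eq_iff[OF bij_betw_imp_inj_on[OF bij_betw_inv_into[OF assms(1)]]]
      by (simp add: relabel_def)
  qed (simp add: relabel_def)
  then have "{i. relabel f I p i \<noteq> relabel f I q i} = ?D" by blast
  moreover have "{x. p x \<noteq> q x} = f ` ?D"
  proof -
    have "{x. p x \<noteq> q x} = {x \<in> f ` I. p x \<noteq> q x}"
      using disagreement_set_subset[OF assms(2,3)] bij_betw_imp_surj_on[OF assms(1)] by blast
    also have "\<dots> = f ` ?D" by blast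
    finally show ?thesis .
  qed
  moreover have "inj_on f ?D" using bij_betw_imp_inj_on[OF assms(1)] by (rule inj_on_subset) blast
  ultimately show ?thesis unfolding hd_def by (simp add: card_image)
qed

lemma exists_relabelled_code:
  assumes "finite X" "A \<subseteq> {p. p permutes X}" "pairwise_hd_ge d A"
  shows "\<exists>B \<subseteq> {p. p permutes {0..<card X}}. pairwise_hd_ge d B \<and> card B = card A"
proof -
  obtain f where f: "bij_betw f {0..<card X} X" using ex_bij_betw_nat_finite[OF assms(1)] by blast
  let ?relabel = "relabel f {0..<card X}"
  have "inj_on ?relabel A"
  proof (rule inj_onI)
    fix p q assume pq: "p \<in> A" "q \<in> A" "?relabel p = ?relabel q"
    have "p permutes X" "q permutes X" using pq(1,2) assms(2) by auto
    moreover have "hd (?relabel p) (?relabel q) = 0" using pq(3) by (simp add: hd_def)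
    ultimately show "p = q" using hd_eq_0_permutes[OF assms(1)] hd_relabel[OF f] by metis
  qed
  moreover have "?relabel ` A \<subseteq> {p. p permutes {0..<card X}}"
    using assms(2) relabel_permutes[OF f] by auto
  moreover have "pairwise_hd_ge d (?relabel ` A)"
    unfolding pairwise_hd_ge_def
  proof (intro ballI impI)
    fix p' q' assume "p' \<in> ?relabel ` A" "q' \<in> ?relabel ` A" "p' \<noteq> q'"
    then obtain p q where "p \<in> A" "q \<in> A" "p' = ?relabel p" "q' = ?relabel q" by blast
    moreover have "p permutes X" "q permutes X" using assms(2) \<open>p \<in> A\<close> \<open>q \<in> A\<close> by auto
    moreover have "p \<noteq> q" using \<open>p' \<noteq> q'\<close> \<open>p' = ?relabel p\<close> \<open>q' = ?relabel q\<close> by blast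
    ultimately show "d \<le> hd p' q'"
      using hd_relabel[OF f] assms(3) unfolding pairwise_hd_ge_def by simp
  qed
  ultimately show ?thesis by (intro exI[of _ "?relabel ` A"]) (simp add: card_image)
qed

lemma card_code_le_M:
  assumes "finite X" "A \<subseteq> {p. p permutes X}" "pairwise_hd_ge d A"
  shows "card A \<le> M (card X) d"
  using exists_relabelled_code[OF assms] card_le_M by metis

lemma exists_large_fibre:
  assumes "finite X" "X \<noteq> {}" "f ` A \<subseteq> X"
  shows "\<exists>y\<in>X. card A \<le> card X * card {a\<in>A. f a = y}"
proof -
  let ?fibre = "\<lambda>y. {a\<in>A. f a = y}"
  have "finite ((\<lambda>y. card (?fibre y)) ` X)" "(\<lambda>y. card (?fibre y)) ` X \<noteq> {}"
    using assms(1,2) by auto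
  then have "Max ((\<lambda>y. card (?fibre y)) ` X) \<in> (\<lambda>y. card (?fibre y)) ` X" by (rule Max_in)
  then obtain y where y: "Max ((\<lambda>y. card (?fibre y)) ` X) = card (?fibre y)" "y \<in> X"
    by (rule imageE)
  have "(\<Union>y\<in>X. ?fibre y) = A" using assms(3) by blast
  then have "card A \<le> (\<Sum>y\<in>X. card (?fibre y))" using card_UN_le[OF assms(1), of ?fibre] by simp
  also have "\<dots> \<le> card X * card (?fibre y)"
  proof (rule sum_bounded_above[of X _ "card (?fibre y)", simplified])
    fix z assume "z \<in> X"
    then show "card (?fibre z) \<le> card (?fibre y)" unfolding y(1)[symmetric] using assms(1) by simp
  qed
  finally show ?thesis using y(2) by blast
qed

text \<open>
  Shortening: the codewords sending \<open>c\<close> to the most popular image \<open>y\<close>, composed with the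
  transposition of \<open>c\<close> and \<open>y\<close>, become permutations of \<open>X - {c}\<close>.
\<close>

lemma exists_shortened_code:
  assumes "finite X" "c \<in> X" "A \<subseteq> {p. p permutes X}" "pairwise_hd_ge d A"
  shows "\<exists>B \<subseteq> {p. p permutes (X - {c})}. pairwise_hd_ge d B \<and> card A \<le> card X * card B"
proof -
  have "(\<lambda>p. p c) ` A \<subseteq> X"
  proof (rule image_subsetI)
    fix p assume "p \<in> A"
    then have "p permutes X" using assms(3) by blast
    then show "p c \<in> X" using assms(2) by (simp add: permutes_in_image)
  qed
  then obtain y where "y \<in> X" and card_fibre: "card A \<le> card X * card {p\<in>A. p c = y}"
    using exists_large_fibre[OF assms(1)] assms(2) by blast
  define B where "B = (\<circ>) (transpose c y) ` {p\<in>A. p c = y}"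
  have "B \<subseteq> {p. p permutes (X - {c})}"
  proof
    fix p' assume "p' \<in> B"
    then obtain p where p: "p \<in> A" "p c = y" "p' = transpose c y \<circ> p"
      unfolding B_def by blast
    have "insert c (X - {c}) = X" using assms(2) by blast
    then have "p permutes insert c (X - {c})" using p(1) assms(3) by auto
    from permutes_insert_lemma[OF this] show "p' \<in> {p. p permutes (X - {c})}" using p by simp
  qed
  moreover have "inj_on ((\<circ>) (transpose c y)) {p\<in>A. p c = y}"
  proof (rule inj_onI)
    fix p q assume "transpose c y \<circ> p = transpose c y \<circ> q"
    then have "transpose c y \<circ> (transpose c y \<circ> p) = transpose c y \<circ> (transpose c y \<circ> q)" by simp
    then show "p = q" by (simp add: comp_assoc[symmetric])
  qed
  then have "card B = card {p\<in>A. p c = y}" unfolding B_def by (rule card_image)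
  moreover have "pairwise_hd_ge d B"
    using assms(4) unfolding B_def pairwise_hd_ge_def by (auto simp: hd_comp_transpose)
  ultimately show ?thesis using card_fibre by (intro exI[of _ B]) simp
qed

lemma card_code_le_shortened_M:
  assumes "0 < card X" "A \<subseteq> {p. p permutes X}" "pairwise_hd_ge d A"
  shows "card A \<le> card X * M (card X - 1) d"
proof -
  have "finite X" "X \<noteq> {}" using assms(1) card_gt_0_iff by blast+
  then obtain c where "c \<in> X" by blast
  obtain B where B: "B \<subseteq> {p. p permutes (X - {c})}" "pairwise_hd_ge d B" "card A \<le> card X * card B"
    using exists_shortened_code[OF \<open>finite X\<close> \<open>c \<in> X\<close> assms(2,3)] by blast
  have "card B \<le> M (card (X - {c})) d"
    using card_code_le_M[OF _ B(1,2)] \<open>finite X\<close> by blast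
  then have "card B \<le> M (card X - 1) d" using \<open>finite X\<close> \<open>c \<in> X\<close> by simp
  from mult_le_mono2[OF this, of "card X"] show ?thesis using B(3) by linarith
qed

subsection \<open>Sharply transitive groups\<close>

lemma sharply_k_transitiveD:
  assumes "sharply_k_transitive k \<Omega> G"
    "length xs = k" "distinct xs" "set xs \<subseteq> \<Omega>" "length ys = k" "distinct ys" "set ys \<subseteq> \<Omega>"
  shows "\<exists>!g. g \<in> G \<and> map g xs = ys"
  using assms unfolding sharply_k_transitive_def by blast

lemma map_permutes_distinct:
  assumes "p permutes \<Omega>" "distinct xs" "set xs \<subseteq> \<Omega>"
  shows "distinct (map p xs) \<and> set (map p xs) \<subseteq> \<Omega>"
  using assms by (auto simp: distinct_map permutes_inj_on permutes_in_image)

lemma sharply_k_transitive_agree_less: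
  assumes "sharply_k_transitive k \<Omega> G" "G \<subseteq> {p. p permutes \<Omega>}" "p \<in> G" "q \<in> G" "p \<noteq> q"
  shows "card {x\<in>\<Omega>. p x = q x} < k"
proof (rule ccontr)
  assume "\<not> ?thesis"
  then obtain T where T: "T \<subseteq> {x\<in>\<Omega>. p x = q x}" "card T = k" "finite T"
    by (meson not_less obtain_subset_with_card_n)
  obtain xs where xs: "set xs = T" "distinct xs" using finite_distinct_list[OF T(3)] by blast
  have len: "length xs = k" using distinct_card[OF xs(2)] xs(1) T(2) by simp
  have "set xs \<subseteq> \<Omega>" using T(1) xs(1) by auto
  moreover have "distinct (map p xs) \<and> set (map p xs) \<subseteq> \<Omega>"
    using map_permutes_distinct[of p \<Omega> xs] assms(2,3) T(1) xs by auto
  ultimately have "\<exists>!g. g \<in> G \<and> map g xs = map p xs"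
    using len by (intro sharply_k_transitiveD[OF assms(1) len xs(2)]) auto
  moreover have "map q xs = map p xs" using T(1) xs(1) by auto
  ultimately show False using assms(3-5) by metis
qed

lemma card_sharply_k_transitive:
  assumes "finite \<Omega>" "k \<le> card \<Omega>" "G \<subseteq> {p. p permutes \<Omega>}" "sharply_k_transitive k \<Omega> G"
  shows "card G = \<Prod>{card \<Omega> - k + 1 .. card \<Omega>}"
proof -
  obtain T where T: "T \<subseteq> \<Omega>" "card T = k" "finite T"
    using obtain_subset_with_card_n[OF assms(2)] by blast
  obtain xs where xs: "set xs = T" "distinct xs" using finite_distinct_list[OF T(3)] by blast
  have len: "length xs = k" using distinct_card[OF xs(2)] xs(1) T(2) by simp
  let ?tuples = "{ys. length ys = k \<and> distinct ys \<and> set ys \<subseteq> \<Omega>}"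
  have unique: "\<exists>!g. g \<in> G \<and> map g xs = ys" if "ys \<in> ?tuples" for ys
    using sharply_k_transitiveD[OF assms(4) len xs(2)] T(1) xs(1) that by auto
  have "bij_betw (\<lambda>g. map g xs) G ?tuples"
  proof (rule bij_betw_imageI)
    show "(\<lambda>g. map g xs) ` G = ?tuples"
    proof
      show "(\<lambda>g. map g xs) ` G \<subseteq> ?tuples"
        using assms(3) map_permutes_distinct xs T(1) len by fastforce
      show "?tuples \<subseteq> (\<lambda>g. map g xs) ` G" using unique by blast
    qed
    then show "inj_on (\<lambda>g. map g xs) G" using unique by (metis (no_types, lifting) imageI inj_onI)
  qed
  then have "card G = card ?tuples" by (rule bij_betw_same_card)
  also have "\<dots> = \<Prod>{card \<Omega> - k + 1 .. card \<Omega>}"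
    by (rule card_lists_distinct_length_eq[OF assms(1,2)])
  finally show ?thesis .
qed

lemma image_Diff_orbit_subset:
  assumes "r ` T \<subseteq> T" "\<And>t. t \<in> T \<Longrightarrow> r (r (r t)) = t" "t \<in> T"
  shows "r ` (T - {t, r t, r (r t)}) \<subseteq> T - {t, r t, r (r t)}"
proof (rule image_subsetI)
  fix v assume v: "v \<in> T - {t, r t, r (r t)}"
  have v3: "r (r (r v)) = v" using v assms(2) by blast
  have t3: "r (r (r t)) = t" using assms(2,3) .
  have "r v \<noteq> t"
  proof
    assume "r v = t"
    then have "v = r (r t)" using v3 by metis
    then show False using v by blast
  qed
  moreover have "r v \<noteq> r t"
  proof
    assume "r v = r t"
    then have "v = t" using v3 t3 by metis
    then show False using v by blast
  qed
  moreover have "r v \<noteq> r (r t)"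
  proof
    assume "r v = r (r t)"
    then have "v = r t" using v3 t3 by metis
    then show False using v by blast
  qed
  moreover have "r v \<in> T" using v assms(1) by blast
  ultimately show "r v \<in> T - {t, r t, r (r t)}" by blast
qed

lemma three_dvd_card_if_fixpoint_free_order_3:
  assumes "finite T" "r ` T \<subseteq> T" "\<And>t. t \<in> T \<Longrightarrow> r t \<noteq> t" "\<And>t. t \<in> T \<Longrightarrow> r (r (r t)) = t"
  shows "3 dvd card T"
  using assms
proof (induction T rule: finite_psubset_induct)
  case (psubset T)
  note closed = psubset.prems(1) and fixpoint_free = psubset.prems(2) and order_3 = psubset.prems(3)
  show ?case
  proof (cases "T = {}")
    case False
    then obtain t where t: "t \<in> T" by blast
    let ?orbit = "{t, r t, r (r t)}"
    have rt: "r t \<in> T" using t closed by blast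
    have orbit: "?orbit \<subseteq> T" using t rt closed by blast
    have "r t \<noteq> t" "r (r t) \<noteq> r t" using fixpoint_free[OF t] fixpoint_free[OF rt] by blast+
    moreover have "r (r t) \<noteq> t"
    proof
      assume "r (r t) = t"
      then have "r (r (r t)) = r t" by simp
      then show False using order_3[OF t] \<open>r t \<noteq> t\<close> by simp
    qed
    ultimately have card_orbit: "card ?orbit = 3" by simp
    have "3 dvd card (T - ?orbit)"
    proof (rule psubset.IH)
      show "T - ?orbit \<subset> T" using t by auto
      show "r ` (T - ?orbit) \<subseteq> T - ?orbit" using closed order_3 t by (rule image_Diff_orbit_subset)
    qed (use fixpoint_free order_3 in blast)+
    moreover have "card T = card (T - ?orbit) + 3"
      using card_Diff_subset[OF finite_subset[OF orbit psubset.hyps] orbit] card_orbit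
        card_mono[OF psubset.hyps orbit] by arith
    ultimately show ?thesis by (simp add: dvd_add)
  qed simp
qed

lemma perm_group_on_permutes: "perm_group_on \<Omega> G \<Longrightarrow> g \<in> G \<Longrightarrow> g permutes \<Omega>"
  unfolding perm_group_on_def by blast

lemma sharply_k_transitive_eq_id:
  assumes "sharply_k_transitive k \<Omega> G" "perm_group_on \<Omega> G" "g \<in> G"
    and "finite \<Omega>" "Y \<subseteq> \<Omega>" "k \<le> card Y" "\<And>y. y \<in> Y \<Longrightarrow> g y = y"
  shows "g = id"
proof (rule ccontr)
  assume "g \<noteq> id"
  moreover have "id \<in> G" "G \<subseteq> {p. p permutes \<Omega>}" using assms(2) unfolding perm_group_on_def by auto
  ultimately have "card {x\<in>\<Omega>. g x = id x} < k"
    using sharply_k_transitive_agree_less[OF assms(1)] assms(3) by blast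
  moreover have "Y \<subseteq> {x\<in>\<Omega>. g x = id x}" using assms(5,7) by auto
  then have "card Y \<le> card {x\<in>\<Omega>. g x = id x}" using assms(4) by (intro card_mono) auto
  ultimately show False using assms(6) by simp
qed

lemma sharply_5_transitive_no_fix_4_cycle_3:
  assumes "finite \<Omega>" "card \<Omega> = 12" "perm_group_on \<Omega> G" "sharply_k_transitive 5 \<Omega> G"
    and "r \<in> G" "S \<subseteq> \<Omega>" "card S = 4" "\<And>s. s \<in> S \<Longrightarrow> r s = s"
    and "{a, b, c} \<subseteq> \<Omega>" "{a, b, c} \<inter> S = {}" "a \<noteq> b" "b \<noteq> c" "c \<noteq> a"
    and "r a = b" "r b = c" "r c = a"
  shows False
proof -
  let ?C = "S \<union> {a, b, c}"
  have G: "G \<subseteq> {p. p permutes \<Omega>}" "id \<in> G" "\<And>p q. p \<in> G \<Longrightarrow> q \<in> G \<Longrightarrow> p \<circ> q \<in> G"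
    using assms(3) unfolding perm_group_on_def by auto
  have "inj r" using G(1) assms(5) permutes_inj by blast
  have fin_S: "finite S" using assms(1,6) by (rule finite_subset[rotated])
  have "card ?C = card S + card {a, b, c}" using assms(10) fin_S by (intro card_Un_disjoint) auto
  then have card_C: "card ?C = 7" using assms(7,11-13) by simp
  have C_sub: "?C \<subseteq> \<Omega>" using assms(6,9) by blast
  moreover have "(r \<circ> r \<circ> r) x = x" if "x \<in> ?C" for x using that assms(8,14-16) by auto
  ultimately have "r \<circ> r \<circ> r = id"
    using sharply_k_transitive_eq_id[OF assms(4,3), of "r \<circ> r \<circ> r" ?C] G(3) assms(1,5) card_C
    by simp
  then have order_3: "r (r (r t)) = t" for t by (metis comp_apply id_apply)
  let ?T = "\<Omega> - ?C"
  have card_T: "card ?T = 5" using card_Diff_subset[OF _ C_sub] card_C fin_S assms(2) by simp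
  have fixpoint_free: "r t \<noteq> t" if "t \<in> ?T" for t
  proof
    assume "r t = t"
    then have "r = id"
      using sharply_k_transitive_eq_id[OF assms(4,3,5), of "insert t S"] that assms(1,6-8) fin_S
      by auto
    then show False using assms(11,14) by simp
  qed
  have "r ` ?T \<subseteq> ?T"
  proof (rule image_subsetI)
    fix t assume t: "t \<in> ?T"
    have "r permutes \<Omega>" using G(1) assms(5) by blast
    then have "r t \<in> \<Omega>" using t by (simp add: permutes_in_image)
    moreover have "r t \<notin> S"
    proof
      assume "r t \<in> S"
      then have "r (r t) = r t" using assms(8) by simp
      then have "r t = t" using injD[OF \<open>inj r\<close>] by blast
      then show False using fixpoint_free[OF t] by simp
    qed
    moreover have "r t \<notin> {a, b, c}"
    proof -
      have "r ` {a, b, c} = {a, b, c}" using assms(14-16) by auto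
      moreover have "r t \<notin> r ` {a, b, c}" using t by (simp add: inj_eq[OF \<open>inj r\<close>])
      ultimately show ?thesis by simp
    qed
    ultimately show "r t \<in> ?T" by blast
  qed
  from three_dvd_card_if_fixpoint_free_order_3[OF finite_Diff[OF assms(1)] this fixpoint_free order_3]
  have "3 dvd card ?T" .
  then show False using card_T by simp
qed

subsection \<open>The restriction \<open>\<pi>\<^sup>\<triangle>\<^sub>-\<close>\<close>

lemma tri_minus_apply:
  "x \<in> \<Omega> - {F} \<Longrightarrow> tri_minus \<Omega> F p x = (if x = inv p F then p F else p x)"
  by (simp add: tri_minus_def tri_def)

lemma tri_minus_eq_comp_transpose:
  assumes "p permutes \<Omega>" "F \<in> \<Omega>"
  shows "tri_minus \<Omega> F p = p \<circ> transpose F (inv p F)"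
proof
  fix x
  have a: "inv p F \<in> \<Omega>" using assms by (simp add: permutes_inv permutes_in_image)
  have pa: "p (inv p F) = F" using assms(1) by (rule permutes_inverses(1))
  show "tri_minus \<Omega> F p x = (p \<circ> transpose F (inv p F)) x"
  proof (cases "x \<in> \<Omega>")
    case False
    then have "x \<noteq> F" "x \<noteq> inv p F" using a assms(2) by auto
    then show ?thesis using False permutes_not_in[OF assms(1) False] by (simp add: tri_minus_def)
  qed (auto simp: tri_minus_def tri_def pa transpose_def)
qed

lemma tri_minus_permutes:
  assumes "p permutes \<Omega>" "F \<in> \<Omega>"
  shows "tri_minus \<Omega> F p permutes (\<Omega> - {F})"
proof -
  have "inv p F \<in> \<Omega>" using assms by (simp add: permutes_inv permutes_in_image)
  from permutes_compose[OF permutes_swap_id[OF assms(2) this] assms(1)]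
  have "tri_minus \<Omega> F p permutes \<Omega>" by (simp add: tri_minus_eq_comp_transpose[OF assms])
  moreover have "insert F (\<Omega> - {F}) = \<Omega>" using assms(2) by blast
  ultimately have "tri_minus \<Omega> F p permutes insert F (\<Omega> - {F})" by simp
  from permutes_insert_lemma[OF this] show ?thesis by (simp add: tri_minus_def)
qed

text \<open>
  Outside \<open>{F, a, b}\<close> with \<open>a = p\<^sup>-\<^sup>1(F)\<close>, \<open>b = q\<^sup>-\<^sup>1(F)\<close> the restrictions agree only where \<open>p\<close> and \<open>q\<close> do;
  six agreements therefore force \<open>q\<^sup>-\<^sup>1p\<close> to fix 4 points and to cycle \<open>F \<mapsto> a \<mapsto> b \<mapsto> F\<close>.
\<close>

lemma card_agree_tri_minus_le_5:
  assumes "finite \<Omega>" "card \<Omega> = 12" "F \<in> \<Omega>" "perm_group_on \<Omega> G" "sharply_k_transitive 5 \<Omega> G"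
    and "p \<in> G" "q \<in> G" "p \<noteq> q"
  shows "card {x\<in>\<Omega>-{F}. tri_minus \<Omega> F p x = tri_minus \<Omega> F q x} \<le> 5"
proof (rule ccontr)
  let ?agree = "{x\<in>\<Omega>-{F}. tri_minus \<Omega> F p x = tri_minus \<Omega> F q x}"
  assume many: "\<not> card ?agree \<le> 5"
  define a where "a = inv p F"
  define b where "b = inv q F"
  let ?S = "{x\<in>\<Omega>. p x = q x} - {F, a, b}"
  have G: "G \<subseteq> {p. p permutes \<Omega>}" using assms(4) unfolding perm_group_on_def by blast
  have "p permutes \<Omega>" "q permutes \<Omega>" using G assms(6,7) by auto
  then have pa: "p a = F" and qb: "q b = F" and inv_q: "\<And>x. inv q (q x) = x"
    unfolding a_def b_def by (simp_all add: permutes_inverses)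
  have "card ?S \<le> card {x\<in>\<Omega>. p x = q x}" using assms(1) by (intro card_mono) auto
  also have "\<dots> < 5" using G assms(6-8) by (rule sharply_k_transitive_agree_less[OF assms(5)])
  finally have "card ?S \<le> 4" by simp
  have "?agree \<subseteq> ?S \<union> (?agree \<inter> {a, b})"
    by (auto simp: tri_minus_apply a_def b_def)
  then have "card ?agree \<le> card (?S \<union> (?agree \<inter> {a, b}))" using assms(1) by (intro card_mono) auto
  also have "\<dots> \<le> card ?S + card (?agree \<inter> {a, b})" by (rule card_Un_le)
  finally have "card ?agree \<le> card ?S + card (?agree \<inter> {a, b})" .
  moreover have "card (?agree \<inter> {a, b}) \<le> card {a, b}" by (intro card_mono) auto
  moreover have "card {a, b} \<le> 2" by (cases "a = b") simp_all
  ultimately have S4: "card ?S = 4" and "card (?agree \<inter> {a, b}) = 2" "card {a, b} = 2"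
    using many \<open>card ?S \<le> 4\<close> by linarith+
  then have "?agree \<inter> {a, b} = {a, b}" by (intro card_subset_eq) auto
  moreover have "a \<noteq> b" using \<open>card {a, b} = 2\<close> by (cases "a = b") simp_all
  ultimately have "a \<noteq> b" "a \<in> ?agree" "b \<in> ?agree" by blast+
  then have "p F = q a" "p b = q F" "a \<in> \<Omega> - {F}" "b \<in> \<Omega> - {F}"
    by (auto simp: tri_minus_apply a_def b_def)
  let ?r = "inv q \<circ> p"
  show False
  proof (rule sharply_5_transitive_no_fix_4_cycle_3[OF assms(1,2,4,5)])
    show "?r \<in> G" using assms(4,6,7) unfolding perm_group_on_def by blast
    show "?S \<subseteq> \<Omega>" "card ?S = 4" "{F, a, b} \<subseteq> \<Omega>" "{F, a, b} \<inter> ?S = {}"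
      using S4 \<open>a \<in> \<Omega> - {F}\<close> \<open>b \<in> \<Omega> - {F}\<close> assms(3) by auto
    show "F \<noteq> a" "a \<noteq> b" "b \<noteq> F" using \<open>a \<noteq> b\<close> \<open>a \<in> \<Omega> - {F}\<close> \<open>b \<in> \<Omega> - {F}\<close> by auto
    show "\<And>s. s \<in> ?S \<Longrightarrow> ?r s = s" "?r F = a" "?r a = b" "?r b = F"
      using \<open>p F = q a\<close> \<open>p b = q F\<close> pa qb inv_q by (auto simp: b_def)
  qed
qed

lemma hd_tri_minus_ge_6:
  assumes "finite \<Omega>" "card \<Omega> = 12" "F \<in> \<Omega>" "perm_group_on \<Omega> G" "sharply_k_transitive 5 \<Omega> G"
    and "p \<in> G" "q \<in> G" "p \<noteq> q"
  shows "6 \<le> hd (tri_minus \<Omega> F p) (tri_minus \<Omega> F q)"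
proof -
  have "p permutes \<Omega>" "q permutes \<Omega>" using assms(6,7) by (auto intro: perm_group_on_permutes[OF assms(4)])
  then have "hd (tri_minus \<Omega> F p) (tri_minus \<Omega> F q)
      = card (\<Omega> - {F}) - card {x\<in>\<Omega>-{F}. tri_minus \<Omega> F p x = tri_minus \<Omega> F q x}"
    using assms(1,3) by (intro hd_permutes) (simp_all add: tri_minus_permutes)
  then show ?thesis using card_agree_tri_minus_le_5[OF assms] assms(1-3) by simp
qed

lemma tri_minus_set_code:
  assumes "finite \<Omega>" "card \<Omega> = 12" "F \<in> \<Omega>" "perm_group_on \<Omega> G" "sharply_k_transitive 5 \<Omega> G"
  shows "tri_minus_set \<Omega> F G \<subseteq> {p. p permutes (\<Omega> - {F})}"
    and "pairwise_hd_ge 6 (tri_minus_set \<Omega> F G)"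
    and "card (tri_minus_set \<Omega> F G) = card G"
proof -
  show "tri_minus_set \<Omega> F G \<subseteq> {p. p permutes (\<Omega> - {F})}"
    unfolding tri_minus_set_def
  proof (intro image_subsetI CollectI)
    fix p assume "p \<in> G"
    with assms(4) have "p permutes \<Omega>" by (rule perm_group_on_permutes)
    then show "tri_minus \<Omega> F p permutes (\<Omega> - {F})" using assms(3) by (rule tri_minus_permutes)
  qed
  show "pairwise_hd_ge 6 (tri_minus_set \<Omega> F G)"
    unfolding pairwise_hd_ge_def tri_minus_set_def
  proof (intro ballI impI)
    fix p' q' assume "p' \<in> tri_minus \<Omega> F ` G" "q' \<in> tri_minus \<Omega> F ` G" "p' \<noteq> q'"
    then obtain p q where "p \<in> G" "q \<in> G" "p' = tri_minus \<Omega> F p" "q' = tri_minus \<Omega> F q"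
      by blast
    moreover from this have "p \<noteq> q" using \<open>p' \<noteq> q'\<close> by blast
    ultimately show "6 \<le> hd p' q'" using hd_tri_minus_ge_6[OF assms] by simp
  qed
  have "inj_on (tri_minus \<Omega> F) G"
  proof (rule inj_onI, rule ccontr)
    fix p q assume "p \<in> G" "q \<in> G" "tri_minus \<Omega> F p = tri_minus \<Omega> F q" "p \<noteq> q"
    then show False using hd_tri_minus_ge_6[OF assms, of p q] by (simp add: hd_def)
  qed
  then show "card (tri_minus_set \<Omega> F G) = card G" unfolding tri_minus_set_def by (rule card_image)
qed

theorem proposition17:
  fixes \<Omega> :: "'a set" and F :: 'a and M12 :: "('a \<Rightarrow> 'a) set"
  assumes "finite \<Omega>" and "card \<Omega> = 12" and "F \<in> \<Omega>"
    and "perm_group_on \<Omega> M12" and "sharply_k_transitive 5 \<Omega> M12"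
  shows "hd_set (tri_minus_set \<Omega> F M12) \<ge> 6
         \<and> (card M12 = 95040 \<and> M 11 6 \<ge> card M12)
         \<and> M 10 6 \<ge> 8640"
proof -
  have "M12 \<subseteq> {p. p permutes \<Omega>}" using perm_group_on_permutes[OF assms(4)] by blast
  moreover have "{8..12::nat} = {8, 9, 10, 11, 12}" by auto
  ultimately have card_M12: "card M12 = 95040"
    using card_sharply_k_transitive[OF assms(1) _ _ assms(5)] assms(2) by simp
  note code = tri_minus_set_code[OF assms]
  have card_X: "card (\<Omega> - {F}) = 11" and "finite (\<Omega> - {F})" using assms(1-3) by simp_all
  have "6 \<le> hd_set (tri_minus_set \<Omega> F M12)" using code(2,3) card_M12 by (intro hd_set_ge) simp_all
  moreover have "card M12 \<le> M 11 6"
    using card_code_le_M[OF \<open>finite (\<Omega> - {F})\<close> code(1,2)] card_X code(3) by simp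
  moreover have "95040 \<le> 11 * M 10 6"
    using card_code_le_shortened_M[OF _ code(1,2)] card_X code(3) card_M12 by simp
  ultimately show ?thesis using card_M12 by simp
qed

end
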